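(* Let $\beta=(\pi_\ell)_{\ell=1}^L$ be a chainable and non-redundant architecture. Then for any $1\le q\le s<t\le L$, the pair $(\pi_q*\cdots*\pi_s,\ \pi_{s+1}*\cdots*\pi_t)$ is chainable and non-redundant.
   Context: A pattern is a tuple $\pi=(a,b,c,d)$ of positive integers. Patterns $\pi=(a,b,c,d),\pi'=(a',b',c',d')$ are chainable if $ac/a'=b'd'/d$, this common value $r(\pi,\pi')$ is an integer, $a\mid a'$ and $d'\mid d$; then $\pi*\pi':=(a,bd/d',a'c'/a,d')$. A chainable pair $(\pi,\pi')$ is redundant if $r(\pi,\pi')\ge\min(b,c')$, and non-redundant otherwise. An architecture $\beta=(\pi_\ell)_{\ell=1}^L$, $\pi_\ell=(a_\ell,b_\ell,c_\ell,d_\ell)$, is a sequence of patterns with $a_\ell c_\ell d_\ell=a_{\ell+1}b_{\ell+1}d_{\ell+1}$; it is chainable if every consecutive pair is chainable, and a chainable architecture is redundant if some consecutive pair $(\pi_\ell,\pi_{\ell+1})$ is redundant. $\pi_q*\cdots*\pi_s$ is the iterated product. *)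

theory Defs
  imports Complex_Main
begin

type_synonym pattern = "nat \<times> nat \<times> nat \<times> nat"

definition pa :: "pattern \<Rightarrow> nat" where "pa p = fst p"
definition pb :: "pattern \<Rightarrow> nat" where "pb p = fst (snd p)"
definition pc :: "pattern \<Rightarrow> nat" where "pc p = fst (snd (snd p))"
definition pd :: "pattern \<Rightarrow> nat" where "pd p = snd (snd (snd p))"

definition is_pattern :: "pattern \<Rightarrow> bool" where
  "is_pattern p \<longleftrightarrow> pa p > 0 \<and> pb p > 0 \<and> pc p > 0 \<and> pd p > 0"

definition rval :: "pattern \<Rightarrow> pattern \<Rightarrow> rat" where
  "rval p p' = of_nat (pa p * pc p) / of_nat (pa p')"

definition chainable :: "pattern \<Rightarrow> pattern \<Rightarrow> bool" where
  "chainable p p' \<longleftrightarrow>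
     of_nat (pa p * pc p) / of_nat (pa p') = (of_nat (pb p' * pd p') / of_nat (pd p) :: rat)
     \<and> rval p p' \<in> \<int> \<and> pa p dvd pa p' \<and> pd p' dvd pd p"

definition pmult :: "pattern \<Rightarrow> pattern \<Rightarrow> pattern" (infixl "\<star>" 70) where
  "p \<star> p' = (pa p, pb p * pd p div pd p', pa p' * pc p' div pa p, pd p')"

definition redundant_pair :: "pattern \<Rightarrow> pattern \<Rightarrow> bool" where
  "redundant_pair p p' \<longleftrightarrow> chainable p p' \<and> rval p p' \<ge> of_nat (min (pb p) (pc p'))"

definition nonredundant_pair :: "pattern \<Rightarrow> pattern \<Rightarrow> bool" where
  "nonredundant_pair p p' \<longleftrightarrow> chainable p p' \<and> rval p p' < of_nat (min (pb p) (pc p'))"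

definition architecture :: "(nat \<Rightarrow> pattern) \<Rightarrow> nat \<Rightarrow> bool" where
  "architecture \<beta> L \<longleftrightarrow> (\<forall>l\<in>{1..L}. is_pattern (\<beta> l)) \<and>
     (\<forall>l. 1 \<le> l \<and> l < L \<longrightarrow>
        pa (\<beta> l) * pc (\<beta> l) * pd (\<beta> l) = pa (\<beta> (l+1)) * pb (\<beta> (l+1)) * pd (\<beta> (l+1)))"

definition chainable_arch :: "(nat \<Rightarrow> pattern) \<Rightarrow> nat \<Rightarrow> bool" where
  "chainable_arch \<beta> L \<longleftrightarrow> architecture \<beta> L \<and>
     (\<forall>l. 1 \<le> l \<and> l < L \<longrightarrow> chainable (\<beta> l) (\<beta> (l+1)))"

definition redundant_arch :: "(nat \<Rightarrow> pattern) \<Rightarrow> nat \<Rightarrow> bool" where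
  "redundant_arch \<beta> L \<longleftrightarrow> chainable_arch \<beta> L \<and>
     (\<exists>l. 1 \<le> l \<and> l < L \<and> redundant_pair (\<beta> l) (\<beta> (l+1)))"

fun iprod :: "(nat \<Rightarrow> pattern) \<Rightarrow> nat \<Rightarrow> nat \<Rightarrow> pattern" where
  "iprod \<beta> q s = (if s \<le> q then \<beta> q else iprod \<beta> q (s - 1) \<star> \<beta> s)"

end

theory Submission
  imports Defs
begin

text \<open>
  For a chainable pair of patterns the ratio \<open>r\<close> is a natural number with \<open>a c = r a'\<close> and \<open>b' d' = r d\<close>.
  Along a chainable architecture the divisibilities \<open>a\<^sub>l | a\<^sub>l\<^sub>+\<^sub>1\<close>, \<open>d\<^sub>l\<^sub>+\<^sub>1 | d\<^sub>l\<close> make all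
  divisions exact, so \<open>\<pi>\<^sub>q * \<dots> * \<pi>\<^sub>s = (a\<^sub>q, b\<^sub>q d\<^sub>q / d\<^sub>s, a\<^sub>s c\<^sub>s / a\<^sub>q, d\<^sub>s)\<close>.
  Consequently the pair of products has the same ratio \<open>r\<^sub>s\<close> as \<open>(\<pi>\<^sub>s, \<pi>\<^sub>s\<^sub>+\<^sub>1)\<close>.
  Non-redundancy \<open>r\<^sub>l < b\<^sub>l\<close>, \<open>r\<^sub>l < c\<^sub>l\<^sub>+\<^sub>1\<close> makes \<open>b\<^sub>l d\<^sub>l\<close> decrease and \<open>a\<^sub>l c\<^sub>l\<close> increase in \<open>l\<close>,
  so the \<open>b\<close>-entry of the left product is at least \<open>b\<^sub>s\<close> and the \<open>c\<close>-entry of the right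
  product at least \<open>c\<^sub>s\<^sub>+\<^sub>1\<close>; both still exceed \<open>r\<^sub>s\<close>.
\<close>

lemma pmult_components [simp]:
  "pa (p \<star> p') = pa p" "pb (p \<star> p') = pb p * pd p div pd p'"
  "pc (p \<star> p') = pa p' * pc p' div pa p" "pd (p \<star> p') = pd p'"
  by (simp_all add: pmult_def pa_def pb_def pc_def pd_def)

lemma rval_eq_of_nat:
  assumes "pa p' > 0" "pa p * pc p = r * pa p'"
  shows "rval p p' = of_nat r"
  using assms unfolding rval_def by (simp add: field_simps flip: of_nat_mult)

lemma chainable_iff_nat_ratio:
  assumes "pa p' > 0" "pd p > 0"
  shows "chainable p p' \<longleftrightarrow>
    (\<exists>r. pa p * pc p = r * pa p' \<and> pb p' * pd p' = r * pd p) \<and> pa p dvd pa p' \<and> pd p' dvd pd p"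
proof
  assume ch: "chainable p p'"
  have "rval p p' \<in> \<int>" "rval p p' \<ge> 0"
    using ch unfolding chainable_def rval_def by auto
  then obtain r :: nat where r: "rval p p' = of_nat r"
    by (metis Ints_cases of_int_0_le_iff of_int_of_nat_eq zero_le_imp_eq_int)
  have "(of_nat (pa p * pc p) :: rat) = of_nat (r * pa p')"
    using r assms unfolding rval_def by (simp add: field_simps)
  moreover have "(of_nat (pb p' * pd p') :: rat) / of_nat (pd p) = of_nat r"
    using ch r unfolding chainable_def rval_def by simp
  then have "(of_nat (pb p' * pd p') :: rat) = of_nat (r * pd p)"
    using assms by (simp add: field_simps)
  ultimately show "(\<exists>r. pa p * pc p = r * pa p' \<and> pb p' * pd p' = r * pd p)
      \<and> pa p dvd pa p' \<and> pd p' dvd pd p"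
    using ch unfolding chainable_def by (metis of_nat_eq_iff)
next
  assume "(\<exists>r. pa p * pc p = r * pa p' \<and> pb p' * pd p' = r * pd p)
      \<and> pa p dvd pa p' \<and> pd p' dvd pd p"
  then obtain r where r: "pa p * pc p = r * pa p'" "pb p' * pd p' = r * pd p"
    and dvd: "pa p dvd pa p'" "pd p' dvd pd p" by blast
  have "(of_nat (pb p' * pd p') :: rat) / of_nat (pd p) = of_nat r"
    using assms(2) r(2) by (simp add: field_simps flip: of_nat_mult)
  with rval_eq_of_nat[OF assms(1) r(1)] dvd show "chainable p p'"
    unfolding chainable_def rval_def by auto
qed

lemma nonredundant_pair_iff_nat_ratio:
  assumes "pa p' > 0" "pd p > 0"
  shows "nonredundant_pair p p' \<longleftrightarrow>
    (\<exists>r. pa p * pc p = r * pa p' \<and> pb p' * pd p' = r * pd p \<and> r < pb p \<and> r < pc p')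
    \<and> pa p dvd pa p' \<and> pd p' dvd pd p"
proof -
  have "rval p p' < of_nat (min (pb p) (pc p')) \<longleftrightarrow> r < pb p \<and> r < pc p'"
    if "pa p * pc p = r * pa p'" for r
    using rval_eq_of_nat[OF assms(1) that] by simp
  then show ?thesis
    unfolding nonredundant_pair_def chainable_iff_nat_ratio[OF assms] by metis
qed

lemma nonredundant_pair_iff_not_redundant:
  "nonredundant_pair p p' \<longleftrightarrow> chainable p p' \<and> \<not> redundant_pair p p'"
  unfolding nonredundant_pair_def redundant_pair_def by auto

lemma nonredundant_pair_products_strict_mono:
  assumes "nonredundant_pair p p'" "pa p' > 0" "pd p > 0"
  shows "pb p' * pd p' < pb p * pd p" "pa p * pc p < pa p' * pc p'"
  using assms(1) unfolding nonredundant_pair_iff_nat_ratio[OF assms(2,3)] using assms(2,3) by auto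

lemma nonredundant_pair_extend:
  assumes nr: "nonredundant_pair p p'" and pos: "pa p' > 0" "pd p > 0"
    and X: "pd X = pd p" "pa X dvd pa p" "pa X * pc X = pa p * pc p" "pb p * pd p \<le> pb X * pd X"
    and Y: "pa Y = pa p'" "pd Y dvd pd p'" "pb Y * pd Y = pb p' * pd p'" "pa p' * pc p' \<le> pa Y * pc Y"
  shows "nonredundant_pair X Y"
proof -
  have "pb p \<le> pb X" "pc p' \<le> pc Y"
    using X(1,4) Y(1,4) pos by simp_all
  from nr obtain r where r: "pa p * pc p = r * pa p'" "pb p' * pd p' = r * pd p" "r < pb p" "r < pc p'"
    and dvd: "pa p dvd pa p'" "pd p' dvd pd p"
    unfolding nonredundant_pair_iff_nat_ratio[OF pos] by blast
  have "pa X dvd pa Y" "pd Y dvd pd X"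
    using X(1,2) Y(1,2) dvd by (auto intro: dvd_trans)
  with r X Y pos show ?thesis
    unfolding nonredundant_pair_iff_nat_ratio[of Y X, simplified X(1) Y(1), OF pos] by auto
qed

lemma iprod_self [simp]: "iprod \<beta> q q = \<beta> q"
  by simp

lemma iprod_Suc [simp]: "q \<le> n \<Longrightarrow> iprod \<beta> q (Suc n) = iprod \<beta> q n \<star> \<beta> (Suc n)"
  by simp

declare iprod.simps [simp del]

lemma chainable_seq_dvd:
  fixes \<beta> :: "nat \<Rightarrow> pattern"
  assumes "q \<le> s" "\<And>l. q \<le> l \<Longrightarrow> l < s \<Longrightarrow> chainable (\<beta> l) (\<beta> (l+1))"
  shows "pa (\<beta> q) dvd pa (\<beta> s) \<and> pd (\<beta> s) dvd pd (\<beta> q)"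
  using assms
proof (induction s rule: dec_induct)
  case (step n)
  then have "pa (\<beta> n) dvd pa (\<beta> (n+1))" "pd (\<beta> (n+1)) dvd pd (\<beta> n)"
    unfolding chainable_def by auto
  with step show ?case by (auto intro: dvd_trans)
qed simp

lemma iprod_components:
  fixes \<beta> :: "nat \<Rightarrow> pattern"
  assumes "q \<le> s" "\<And>l. q \<le> l \<Longrightarrow> l < s \<Longrightarrow> chainable (\<beta> l) (\<beta> (l+1))"
  shows "pa (iprod \<beta> q s) = pa (\<beta> q) \<and> pd (iprod \<beta> q s) = pd (\<beta> s)
    \<and> pa (iprod \<beta> q s) * pc (iprod \<beta> q s) = pa (\<beta> s) * pc (\<beta> s)
    \<and> pb (iprod \<beta> q s) * pd (iprod \<beta> q s) = pb (\<beta> q) * pd (\<beta> q)"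
  using assms
proof (induction s rule: dec_induct)
  case base
  then show ?case by simp
next
  case (step n)
  have "pa (\<beta> q) dvd pa (\<beta> (n+1))" "pd (\<beta> (n+1)) dvd pd (\<beta> q)"
    using chainable_seq_dvd[of q "n+1" \<beta>] step by auto
  with step show ?case
    by (auto simp: dvd_mult dvd_mult2)
qed

lemma nonredundant_seq_mono:
  fixes \<beta> :: "nat \<Rightarrow> pattern"
  assumes "q \<le> s" and nr: "\<And>l. q \<le> l \<Longrightarrow> l < s \<Longrightarrow> nonredundant_pair (\<beta> l) (\<beta> (l+1))"
    and pat: "\<And>l. q \<le> l \<Longrightarrow> l \<le> s \<Longrightarrow> is_pattern (\<beta> l)"
  shows "pb (\<beta> s) * pd (\<beta> s) \<le> pb (\<beta> q) * pd (\<beta> q)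
    \<and> pa (\<beta> q) * pc (\<beta> q) \<le> pa (\<beta> s) * pc (\<beta> s)"
  using assms
proof (induction s rule: dec_induct)
  case (step n)
  have "pb (\<beta> (n+1)) * pd (\<beta> (n+1)) < pb (\<beta> n) * pd (\<beta> n)"
    "pa (\<beta> n) * pc (\<beta> n) < pa (\<beta> (n+1)) * pc (\<beta> (n+1))"
    using nonredundant_pair_products_strict_mono[of "\<beta> n" "\<beta> (n+1)"] step
    by (auto simp: is_pattern_def)
  with step show ?case by auto
qed simp

theorem lemma4p12:
  fixes \<beta> :: "nat \<Rightarrow> pattern" and L q s t :: nat
  assumes "chainable_arch \<beta> L"
    and "\<not> redundant_arch \<beta> L"
    and "1 \<le> q" and "q \<le> s" and "s < t" and "t \<le> L"
  shows "chainable (iprod \<beta> q s) (iprod \<beta> (s+1) t)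
       \<and> nonredundant_pair (iprod \<beta> q s) (iprod \<beta> (s+1) t)"
proof -
  have pat: "\<And>l. 1 \<le> l \<Longrightarrow> l \<le> L \<Longrightarrow> is_pattern (\<beta> l)"
    using assms(1) unfolding chainable_arch_def architecture_def by auto
  have nr: "\<And>l. 1 \<le> l \<Longrightarrow> l < L \<Longrightarrow> nonredundant_pair (\<beta> l) (\<beta> (l+1))"
    using assms(1,2) unfolding redundant_arch_def chainable_arch_def
    by (auto simp: nonredundant_pair_iff_not_redundant)
  then have ch: "\<And>l. 1 \<le> l \<Longrightarrow> l < L \<Longrightarrow> chainable (\<beta> l) (\<beta> (l+1))"
    unfolding nonredundant_pair_def by blast
  define X where "X = iprod \<beta> q s"
  define Y where "Y = iprod \<beta> (s+1) t"
  have X: "pa X = pa (\<beta> q)" "pd X = pd (\<beta> s)" "pa X * pc X = pa (\<beta> s) * pc (\<beta> s)"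
    "pb X * pd X = pb (\<beta> q) * pd (\<beta> q)"
    using iprod_components[of q s \<beta>] ch assms unfolding X_def by auto
  have Y: "pa Y = pa (\<beta> (s+1))" "pd Y = pd (\<beta> t)" "pa Y * pc Y = pa (\<beta> t) * pc (\<beta> t)"
    "pb Y * pd Y = pb (\<beta> (s+1)) * pd (\<beta> (s+1))"
    using iprod_components[of "s+1" t \<beta>] ch assms unfolding Y_def by auto
  have mono: "pb (\<beta> s) * pd (\<beta> s) \<le> pb (\<beta> q) * pd (\<beta> q)"
    "pa (\<beta> (s+1)) * pc (\<beta> (s+1)) \<le> pa (\<beta> t) * pc (\<beta> t)"
    using nonredundant_seq_mono[of q s \<beta>] nonredundant_seq_mono[of "s+1" t \<beta>] nr pat assms by auto
  have dvd: "pa (\<beta> q) dvd pa (\<beta> s)" "pd (\<beta> t) dvd pd (\<beta> (s+1))"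
    using chainable_seq_dvd[of q s \<beta>] chainable_seq_dvd[of "s+1" t \<beta>] ch assms by auto
  have "nonredundant_pair X Y"
  proof (rule nonredundant_pair_extend[OF nr[of s]])
    show "pb (\<beta> s) * pd (\<beta> s) \<le> pb X * pd X" "pa (\<beta> (s+1)) * pc (\<beta> (s+1)) \<le> pa Y * pc Y"
      using X(4) Y(3) mono by simp_all
  qed (use X Y dvd pat[of s] pat[of "s+1"] assms in \<open>auto simp: is_pattern_def\<close>)
  then show ?thesis unfolding X_def Y_def nonredundant_pair_def by simp
qed

end
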